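(* Let $X$ be a real normed linear space. Then $$\sup_{f\in S_{X^*}}\operatorname{diam} M_f^+=\mathcal{R}(X),$$ where $M_f^+=\{x\in S_X: f(x)=\|f\|\}$ and $\mathcal{R}(X)=\sup\{\|x-y\|:\ \overline{xy}\subset S_X\}$.
   Context: $S_X$, $S_{X^*}$ are the unit spheres of $X$ and its dual. $\overline{xy}=\{(1-t)x+ty:t\in[0,1]\}$ is the closed segment joining $x$ and $y$. $\operatorname{diam}A=\sup_{a,b\in A}\|a-b\|$. *)

theory Defs
  imports "HOL-Analysis.Analysis"
begin

definition Mplus :: "('a::real_normed_vector \<Rightarrow>\<^sub>L real) \<Rightarrow> 'a set" where
  "Mplus f = {x \<in> sphere 0 1. blinfun_apply f x = norm f}"

definition RX :: "'a::real_normed_vector itself \<Rightarrow> real" where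
  "RX _ = Sup {norm (x - y) | x y :: 'a. closed_segment x y \<subseteq> sphere 0 1}"

end

theory Submission
  imports Defs
begin

text \<open>
  For a norm-one functional f, the set M_f^+ = B_X \<inter> {f = 1} is convex, so any two of its
  points span a segment inside S_X; hence diam M_f^+ \<le> R(X). Conversely, if the segment [x, y]
  lies in S_X, a norm-one functional attaining its norm at the midpoint must equal 1 at both
  endpoints, so x, y \<in> M_f^+ and \<parallel>x - y\<parallel> \<le> diam M_f^+.

  Norming functionals (Hahn-Banach) are obtained as minimal sublinear functionals below a
  sublinear majorant, found by Zorn's lemma. Such a minimal q is linear: for every direction z,
  q_z(x) = inf {q(x + t z) - t q(z) | t \<ge> 0} is sublinear, below q, and satisfies
  q_z(-z) \<le> -q(z), so minimality forces q to be odd.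
\<close>

definition sublinear :: "('a::real_vector \<Rightarrow> real) \<Rightarrow> bool" where
  "sublinear q \<longleftrightarrow>
     (\<forall>x y. q (x + y) \<le> q x + q y) \<and> (\<forall>c x. c > 0 \<longrightarrow> q (c *\<^sub>R x) = c * q x)"

lemma sublinear_add: "sublinear q \<Longrightarrow> q (x + y) \<le> q x + q y"
  by (simp add: sublinear_def)

lemma sublinear_scaleR: "sublinear q \<Longrightarrow> c > 0 \<Longrightarrow> q (c *\<^sub>R x) = c * q x"
  by (simp add: sublinear_def)

lemma sublinearI:
  assumes add: "\<And>x y. q (x + y) \<le> q x + q y"
    and scale: "\<And>c x. c > 0 \<Longrightarrow> q (c *\<^sub>R x) \<le> c * q x"
  shows "sublinear q"
  unfolding sublinear_def
proof (intro conjI allI impI add antisym)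
  fix c :: real and x assume c: "c > 0"
  show "q (c *\<^sub>R x) \<le> c * q x" using c by (rule scale)
  have "q x = q (inverse c *\<^sub>R (c *\<^sub>R x))" using c by simp
  also have "\<dots> \<le> inverse c * q (c *\<^sub>R x)" using c by (intro scale) simp
  finally show "c * q x \<le> q (c *\<^sub>R x)" using c by (simp add: field_simps)
qed

lemma sublinear_zero: assumes "sublinear q" shows "q 0 = 0"
  using sublinear_scaleR[OF assms, of 2 0] by simp

lemma sublinear_scaleR_nonneg: "sublinear q \<Longrightarrow> c \<ge> 0 \<Longrightarrow> q (c *\<^sub>R x) = c * q x"
  by (cases "c = 0") (auto simp: sublinear_zero sublinear_scaleR)

lemma sublinear_minus_le: assumes "sublinear q" shows "- q (- x) \<le> q x"
  using sublinear_add[OF assms, of x "- x"] sublinear_zero[OF assms] by simp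

lemma sublinear_norm: "sublinear norm"
  by (auto simp: sublinear_def norm_triangle_ineq)

lemma sublinear_odd_imp_linear:
  assumes q: "sublinear q" and odd: "\<And>x. q (- x) = - q x"
  shows "linear q"
  unfolding linear_iff
proof (intro conjI allI)
  fix x y
  have "q (- x + - y) \<le> q (- x) + q (- y)" by (rule sublinear_add[OF q])
  then have "q x + q y \<le> q (x + y)" using odd[of "x + y"] by (simp add: odd)
  then show "q (x + y) = q x + q y" using sublinear_add[OF q, of x y] by simp
next
  fix c x
  show "q (c *\<^sub>R x) = c *\<^sub>R q x"
  proof (cases "c \<ge> 0")
    case False
    then have "q ((- c) *\<^sub>R (- x)) = (- c) * q (- x)" by (intro sublinear_scaleR_nonneg[OF q]) auto
    then show ?thesis by (simp add: odd)
  qed (simp add: sublinear_scaleR_nonneg[OF q])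
qed

definition inf_along :: "('a::real_vector \<Rightarrow> real) \<Rightarrow> 'a \<Rightarrow> 'a \<Rightarrow> real" where
  "inf_along q z x = (INF t\<in>{0..}. q (x + t *\<^sub>R z) - t * q z)"

lemma bdd_below_inf_along:
  assumes q: "sublinear q"
  shows "bdd_below ((\<lambda>t. q (x + t *\<^sub>R z) - t * q z) ` {0..})"
proof (rule bdd_belowI2)
  fix t :: real assume "t \<in> {0..}"
  then have "q (t *\<^sub>R z) = t * q z" using sublinear_scaleR_nonneg[OF q] by simp
  moreover have "q (t *\<^sub>R z) \<le> q (x + t *\<^sub>R z) + q (- x)"
    using sublinear_add[OF q, of "x + t *\<^sub>R z" "- x"] by simp
  ultimately show "- q (- x) \<le> q (x + t *\<^sub>R z) - t * q z" by simp
qed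

lemma inf_along_le:
  "sublinear q \<Longrightarrow> t \<ge> 0 \<Longrightarrow> inf_along q z x \<le> q (x + t *\<^sub>R z) - t * q z"
  unfolding inf_along_def by (intro cINF_lower bdd_below_inf_along) auto

lemma inf_along_greatest:
  "(\<And>t. t \<ge> 0 \<Longrightarrow> b \<le> q (x + t *\<^sub>R z) - t * q z) \<Longrightarrow> b \<le> inf_along q z x"
  unfolding inf_along_def by (intro cINF_greatest) auto

lemma inf_along_le_self: "sublinear q \<Longrightarrow> inf_along q z x \<le> q x"
  using inf_along_le[of q 0 z x] by simp

lemma inf_along_minus: "sublinear q \<Longrightarrow> inf_along q z (- z) \<le> - q z"
  using inf_along_le[of q 1 z "- z"] sublinear_zero[of q] by simp

lemma sublinear_inf_along:
  assumes q: "sublinear q"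
  shows "sublinear (inf_along q z)"
proof (rule sublinearI)
  fix x y
  have "inf_along q z (x + y) - (q (y + t *\<^sub>R z) - t * q z) \<le> q (x + s *\<^sub>R z) - s * q z"
    if "s \<ge> 0" "t \<ge> 0" for s t
  proof -
    have "inf_along q z (x + y) \<le> q ((x + s *\<^sub>R z) + (y + t *\<^sub>R z)) - (s + t) * q z"
      using inf_along_le[OF q, of "s + t" z "x + y"] that by (simp add: algebra_simps)
    also have "\<dots> \<le> q (x + s *\<^sub>R z) + q (y + t *\<^sub>R z) - (s + t) * q z"
      using sublinear_add[OF q] by simp
    finally show ?thesis by (simp add: algebra_simps)
  qed
  then have "inf_along q z (x + y) - (q (y + t *\<^sub>R z) - t * q z) \<le> inf_along q z x"
    if "t \<ge> 0" for t
    using that by (intro inf_along_greatest) auto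
  then have "inf_along q z (x + y) - inf_along q z x \<le> q (y + t *\<^sub>R z) - t * q z" if "t \<ge> 0" for t
    using that by force
  then have "inf_along q z (x + y) - inf_along q z x \<le> inf_along q z y"
    by (rule inf_along_greatest)
  then show "inf_along q z (x + y) \<le> inf_along q z x + inf_along q z y" by simp
next
  fix c :: real and x assume c: "c > 0"
  have "inf_along q z (c *\<^sub>R x) / c \<le> q (x + t *\<^sub>R z) - t * q z" if t: "t \<ge> 0" for t
  proof -
    have "inf_along q z (c *\<^sub>R x) \<le> q (c *\<^sub>R (x + t *\<^sub>R z)) - (c * t) * q z"
      using inf_along_le[OF q, of "c * t" z "c *\<^sub>R x"] c t by (simp add: algebra_simps)
    also have "\<dots> = c * (q (x + t *\<^sub>R z) - t * q z)"
      using sublinear_scaleR[OF q c, of "x + t *\<^sub>R z"] by (simp add: right_diff_distrib)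
    finally show ?thesis using c by (simp add: field_simps)
  qed
  then have "inf_along q z (c *\<^sub>R x) / c \<le> inf_along q z x" by (rule inf_along_greatest)
  then show "inf_along q z (c *\<^sub>R x) \<le> c * inf_along q z x" using c by (simp add: field_simps)
qed

lemma sublinear_INF_chain:
  assumes ne: "C \<noteq> {}" and sub: "\<And>q. q \<in> C \<Longrightarrow> sublinear q"
    and chain: "\<And>p q. p \<in> C \<Longrightarrow> q \<in> C \<Longrightarrow> p \<le> q \<or> q \<le> p"
    and bdd: "\<And>x. bdd_below ((\<lambda>q. q x) ` C)"
  shows "sublinear (\<lambda>x. INF q\<in>C. q x)"
proof (rule sublinearI)
  let ?r = "\<lambda>x. INF q\<in>C. q x"
  have lower: "?r x \<le> q x" if "q \<in> C" for q x by (rule cINF_lower[OF bdd that])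
  fix x y
  have "?r (x + y) \<le> p x + q y" if pq: "p \<in> C" "q \<in> C" for p q
  proof -
    obtain s where s: "s \<in> C" "s \<le> p" "s \<le> q" using chain[OF pq] pq by blast
    have "?r (x + y) \<le> s x + s y"
      using lower[OF s(1), of "x + y"] sublinear_add[OF sub[OF s(1)], of x y] by linarith
    also have "\<dots> \<le> p x + q y" using s by (simp add: add_mono le_fun_def)
    finally show ?thesis .
  qed
  then have "?r (x + y) - q y \<le> ?r x" if "q \<in> C" for q
    using that ne by (force intro: cINF_greatest)
  then have "?r (x + y) - ?r x \<le> ?r y"
    using ne by (force intro: cINF_greatest)
  then show "?r (x + y) \<le> ?r x + ?r y" by simp
next
  fix c :: real and x assume c: "c > 0"
  have "(INF q\<in>C. q (c *\<^sub>R x)) / c \<le> q x" if "q \<in> C" for q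
    using cINF_lower[OF bdd that, of "c *\<^sub>R x"] sublinear_scaleR[OF sub[OF that] c] c
    by (simp add: field_simps)
  then have "(INF q\<in>C. q (c *\<^sub>R x)) / c \<le> (INF q\<in>C. q x)" using ne by (rule cINF_greatest[rotated])
  then show "(INF q\<in>C. q (c *\<^sub>R x)) \<le> c * (INF q\<in>C. q x)" using c by (simp add: field_simps)
qed

lemma minimal_sublinear_below:
  assumes q0: "sublinear q0"
  obtains q where "sublinear q" "q \<le> q0" "\<And>p. sublinear p \<Longrightarrow> p \<le> q \<Longrightarrow> p = q"
proof -
  define S where "S = {q. sublinear q \<and> q \<le> q0}"
  have po: "partial_order_on S (relation_of (\<ge>) S)"
    by (auto simp: partial_order_on_def preorder_on_def refl_on_def trans_on_def antisym_on_def
        relation_of_def)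
  have "\<exists>u \<in> S. \<forall>q \<in> C. u \<le> q" if C: "C \<in> Chains (relation_of (\<ge>) S)" for C
  proof (cases "C = {}")
    case True
    then show ?thesis using q0 by (auto simp: S_def)
  next
    case False
    have CS: "C \<subseteq> S" and chain: "\<And>p q. p \<in> C \<Longrightarrow> q \<in> C \<Longrightarrow> p \<le> q \<or> q \<le> p"
      using C by (auto simp: Chains_def relation_of_def)
    have bdd: "bdd_below ((\<lambda>q. q x) ` C)" for x
    proof (rule bdd_belowI2)
      fix q assume "q \<in> C"
      then have "sublinear q" "q (- x) \<le> q0 (- x)" using CS by (auto simp: S_def le_fun_def)
      then show "- q0 (- x) \<le> q x" using sublinear_minus_le[of q x] by linarith
    qed
    have "(\<lambda>x. INF q\<in>C. q x) \<in> S"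
    proof -
      obtain p where p: "p \<in> C" using False by blast
      then have "p \<le> q0" using CS by (auto simp: S_def)
      then have "(INF q\<in>C. q x) \<le> q0 x" for x
        using cINF_lower[OF bdd p, of x] by (meson le_fun_def order_trans)
      moreover have "sublinear (\<lambda>x. INF q\<in>C. q x)"
        using False CS chain bdd by (intro sublinear_INF_chain) (auto simp: S_def)
      ultimately show ?thesis by (simp add: S_def le_fun_def)
    qed
    moreover have "\<forall>q \<in> C. (\<lambda>x. INF q\<in>C. q x) \<le> q"
      using bdd by (auto simp: le_fun_def intro: cINF_lower)
    ultimately show ?thesis by blast
  qed
  then obtain q where "q \<in> S" "\<And>p. p \<in> S \<Longrightarrow> p \<le> q \<Longrightarrow> p = q"
    using predicate_Zorn[OF po] by blast
  then show thesis by (intro that) (auto simp: S_def intro: order_trans)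
qed

lemma minimal_sublinear_imp_linear:
  assumes q: "sublinear q" and minimal: "\<And>p. sublinear p \<Longrightarrow> p \<le> q \<Longrightarrow> p = q"
  shows "linear q"
proof (rule sublinear_odd_imp_linear[OF q])
  fix z
  have "inf_along q z = q"
    using sublinear_inf_along[OF q] inf_along_le_self[OF q] by (intro minimal) (auto simp: le_fun_def)
  then have "q (- z) \<le> - q z" using inf_along_minus[OF q, of z] by simp
  then show "q (- z) = - q z" using sublinear_minus_le[OF q, of z] by simp
qed

lemma exists_norming_functional:
  fixes m :: "'a::real_normed_vector"
  assumes "m \<noteq> 0"
  obtains f :: "'a \<Rightarrow>\<^sub>L real" where "norm f = 1" "f m = norm m"
proof -
  obtain q where q: "sublinear q" "q \<le> inf_along norm m"
    and minimal: "\<And>p. sublinear p \<Longrightarrow> p \<le> q \<Longrightarrow> p = q"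
    using minimal_sublinear_below[OF sublinear_inf_along[OF sublinear_norm]] by blast
  have lin: "linear q" using q(1) minimal by (rule minimal_sublinear_imp_linear)
  have q_le: "q x \<le> inf_along norm m x" for x using q(2) by (simp add: le_fun_def)
  have le_norm: "q x \<le> norm x" for x
    using q_le inf_along_le_self[OF sublinear_norm] by (rule order_trans)
  have bound: "norm (q x) \<le> norm x * 1" for x
    using le_norm[of x] le_norm[of "- x"] linear_neg[OF lin, of x] by auto
  have "q (- m) \<le> - norm m"
    using q_le inf_along_minus[OF sublinear_norm] by (rule order_trans)
  then have qm: "q m = norm m" using linear_neg[OF lin, of m] le_norm[of m] by simp
  have bl: "bounded_linear q"
    using lin bound by (intro bounded_linear_intro[where K = 1]) (auto simp: linear_add linear_scale)
  define f where "f = Blinfun q"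
  have f: "blinfun_apply f = q" unfolding f_def using bl by (rule bounded_linear_Blinfun_apply)
  have "norm f \<le> 1" using bound f by (intro norm_blinfun_bound) auto
  moreover have "norm m \<le> norm f * norm m" using norm_blinfun[of f m] f qm by simp
  then have "1 \<le> norm f" using assms by simp
  ultimately show thesis using that f qm by auto
qed

lemma ex_unit_vector_iff_ex_unit_functional:
  "(\<exists>x::'a::real_normed_vector. norm x = 1) \<longleftrightarrow> (\<exists>f::'a \<Rightarrow>\<^sub>L real. norm f = 1)"
proof
  assume "\<exists>x::'a. norm x = 1"
  then obtain x :: 'a where "norm x = 1" ..
  then have "x \<noteq> 0" by auto
  then show "\<exists>f::'a \<Rightarrow>\<^sub>L real. norm f = 1" by (metis exists_norming_functional)
next
  assume "\<exists>f::'a \<Rightarrow>\<^sub>L real. norm f = 1"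
  then obtain f :: "'a \<Rightarrow>\<^sub>L real" where "norm f = 1" ..
  then have "f \<noteq> 0" by auto
  then obtain x where "f x \<noteq> 0" by (metis blinfun_eqI zero_blinfun.rep_eq)
  then have "x \<noteq> 0" by auto
  then show "\<exists>x::'a. norm x = 1" by (intro exI[of _ "x /\<^sub>R norm x"]) simp
qed

lemma Mplus_eq_cball_Int:
  assumes "norm f = 1"
  shows "Mplus f = cball 0 1 \<inter> blinfun_apply f -` {1}"
proof -
  have "norm x = 1" if "norm x \<le> 1" "f x = 1" for x
    using that norm_blinfun[of f x] assms by simp
  then show ?thesis using assms by (auto simp: Mplus_def)
qed

lemma convex_Mplus: "norm f = 1 \<Longrightarrow> convex (Mplus f)"
  by (simp add: Mplus_eq_cball_Int convex_Int convex_linear_vimage blinfun.bounded_linear_right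
      bounded_linear.linear)

lemma Mplus_subset_sphere: "Mplus f \<subseteq> sphere 0 1"
  by (auto simp: Mplus_def)

lemma bounded_Mplus: "bounded (Mplus f)"
  using Mplus_subset_sphere sphere_cball bounded_cball by (blast intro: bounded_subset)

lemma closed_segment_Mplus_subset_sphere:
  "norm f = 1 \<Longrightarrow> x \<in> Mplus f \<Longrightarrow> y \<in> Mplus f \<Longrightarrow> closed_segment x y \<subseteq> sphere 0 1"
  using closed_segment_subset convex_Mplus Mplus_subset_sphere by blast

lemma closed_segment_subset_sphere_imp_Mplus:
  fixes x y :: "'a::real_normed_vector"
  assumes seg: "closed_segment x y \<subseteq> sphere 0 1"
  obtains f :: "'a \<Rightarrow>\<^sub>L real" where "norm f = 1" "x \<in> Mplus f" "y \<in> Mplus f"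
proof -
  have "midpoint x y \<in> closed_segment x y" by simp
  then have "midpoint x y \<in> sphere 0 1" using seg by blast
  then obtain f :: "'a \<Rightarrow>\<^sub>L real" where f: "norm f = 1" "f (midpoint x y) = 1"
    using exists_norming_functional[of "midpoint x y"] by force
  have "x \<in> sphere 0 1" "y \<in> sphere 0 1" using seg by auto
  then have norms: "norm x = 1" "norm y = 1" and "f x \<le> 1" "f y \<le> 1"
    using norm_blinfun[of f x] norm_blinfun[of f y] f by auto
  moreover have "f (midpoint x y) = (f x + f y) / 2"
    by (simp add: midpoint_def blinfun.add_right blinfun.scaleR_right)
  ultimately have "f x = 1" "f y = 1" using f by auto
  with f norms show thesis by (intro that) (auto simp: Mplus_def)
qed

lemma bdd_above_segment_lengths:
  "bdd_above {norm (x - y) | x y :: 'a::real_normed_vector. closed_segment x y \<subseteq> sphere 0 1}"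
proof (rule bdd_aboveI)
  fix r assume "r \<in> {norm (x - y) | x y :: 'a. closed_segment x y \<subseteq> sphere 0 1}"
  then obtain x y :: 'a where "r = norm (x - y)" "closed_segment x y \<subseteq> sphere 0 1" by blast
  moreover from this(2) have "norm x = 1" "norm y = 1" by auto
  ultimately show "r \<le> 2" using norm_triangle_ineq4[of x y] by simp
qed

lemma zero_mem_segment_lengths:
  "norm (e::'a::real_normed_vector) = 1 \<Longrightarrow>
    0 \<in> {norm (x - y) | x y :: 'a. closed_segment x y \<subseteq> sphere 0 1}"
  by (intro CollectI exI[of _ e]) auto

lemma RX_nonneg: "norm (e::'a::real_normed_vector) = 1 \<Longrightarrow> 0 \<le> RX TYPE('a)"
  unfolding RX_def by (rule cSup_upper[OF zero_mem_segment_lengths bdd_above_segment_lengths])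

lemma diameter_Mplus_le_RX:
  fixes f :: "'a::real_normed_vector \<Rightarrow>\<^sub>L real"
  assumes f: "norm f = 1"
  shows "diameter (Mplus f) \<le> RX TYPE('a)"
proof (rule diameter_le)
  show "Mplus f \<noteq> {} \<or> 0 \<le> RX TYPE('a)"
    using f RX_nonneg ex_unit_vector_iff_ex_unit_functional[where 'a='a] by blast
  fix x y assume "x \<in> Mplus f" "y \<in> Mplus f"
  with f have "closed_segment x y \<subseteq> sphere 0 1" by (rule closed_segment_Mplus_subset_sphere)
  then show "norm (x - y) \<le> RX TYPE('a)"
    unfolding RX_def by (intro cSup_upper[OF _ bdd_above_segment_lengths]) blast
qed

lemma segment_length_le_diameter_Mplus:
  fixes x y :: "'a::real_normed_vector"
  assumes "closed_segment x y \<subseteq> sphere 0 1"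
  obtains f :: "'a \<Rightarrow>\<^sub>L real" where "norm f = 1" "norm (x - y) \<le> diameter (Mplus f)"
proof -
  obtain f :: "'a \<Rightarrow>\<^sub>L real" where f: "norm f = 1" "x \<in> Mplus f" "y \<in> Mplus f"
    using closed_segment_subset_sphere_imp_Mplus[OF assms] .
  then show thesis
    using diameter_bounded_bound[OF bounded_Mplus f(2,3)] by (intro that) (auto simp: dist_norm)
qed

theorem theorem2p9:
  shows "(SUP f \<in> {f :: 'a::real_normed_vector \<Rightarrow>\<^sub>L real. norm f = 1}. diameter (Mplus f))
         = RX TYPE('a)"
proof (cases "\<exists>e::'a. norm e = 1")
  case False
  then have "{f :: 'a \<Rightarrow>\<^sub>L real. norm f = 1} = {}"
    using ex_unit_vector_iff_ex_unit_functional[where 'a='a] by blast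
  moreover have "{norm (x - y) | x y :: 'a. closed_segment x y \<subseteq> sphere 0 1} = {}"
    using False by auto
  ultimately show ?thesis by (simp add: RX_def)
next
  case True
  let ?F = "{f :: 'a \<Rightarrow>\<^sub>L real. norm f = 1}"
  have bdd: "bdd_above ((\<lambda>f. diameter (Mplus f)) ` ?F)"
    using diameter_Mplus_le_RX by (intro bdd_aboveI2[where M = "RX TYPE('a)"]) simp
  have "(SUP f \<in> ?F. diameter (Mplus f)) \<le> RX TYPE('a)"
    using True ex_unit_vector_iff_ex_unit_functional[where 'a='a] diameter_Mplus_le_RX
    by (auto intro: cSUP_least)
  moreover have "RX TYPE('a) \<le> (SUP f \<in> ?F. diameter (Mplus f))"
    unfolding RX_def
  proof (rule cSup_least)
    fix r assume "r \<in> {norm (x - y) | x y :: 'a. closed_segment x y \<subseteq> sphere 0 1}"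
    then obtain f :: "'a \<Rightarrow>\<^sub>L real" where "norm f = 1" "r \<le> diameter (Mplus f)"
      using segment_length_le_diameter_Mplus by blast
    then show "r \<le> (SUP f \<in> ?F. diameter (Mplus f))" using bdd by (intro cSUP_upper2) auto
  qed (use True zero_mem_segment_lengths in blast)
  ultimately show ?thesis by (rule antisym)
qed

end
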